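(* Consider $N$ advertisers, advertiser $i$ having click-through rate $c_i\in(0,1]$, abandonment probability $\gamma_i\ge 0$ with $\mu_i=c_i+\gamma_i\le 1$, and private value per click $v_i\ge 0$; index them so that $\frac{c_1v_1}{\mu_1}\ge\frac{c_2v_2}{\mu_2}\ge\dots\ge\frac{c_Nv_N}{\mu_N}$. Define bids recursively from the bottom by $b_{N+1}=0$ (so the term $\frac{b_{N+1}c_{N+1}}{\mu_{N+1}}$ is $0$) and $$b_i=\frac{\mu_i}{c_i}\Big[v_ic_i+(1-\mu_i)\frac{b_{i+1}c_{i+1}}{\mu_{i+1}}\Big],\qquad i=N,\dots,1.$$ Then, in the CE mechanism, this bid profile is an envy-free pure-strategy Nash equilibrium: no advertiser can increase its expected payoff by unilaterally changing its bid (in particular by moving to any other position). Moreover, at this equilibrium the resulting ranking is socially optimal (it maximizes the total expected value $\sum_{\text{positions }k} v_{(k)}\,c_{(k)}\prod_{l<k}(1-\mu_{(l)})$ over all orderings of the advertisers) and is also optimal for the search engine for the resulting per-click prices (it maximizes $\sum_k p_{(k)}c_{(k)}\prod_{l<k}(1-\mu_{(l)})$ over all orderings with these prices).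
   Context: Click model: users view ads top to bottom; having viewed the ad at position $k$ the user clicks it with probability $c$ of that ad, abandons with probability $\gamma$ of that ad, and otherwise moves on. Thus if ads are placed in order $(1),\dots,(N)$, the ad at position $k$ is clicked with probability $c_{(k)}\prod_{l<k}(1-\mu_{(l)})$. CE mechanism: given bids $b$, with $w=c/\mu$, ads are ranked in descending order of $wb$, and the ad at position $i$ pays per click $p_i=\frac{w_{i+1}b_{i+1}}{w_i}=\frac{b_{i+1}c_{i+1}\mu_i}{\mu_{i+1}c_i}$, where $i+1$ denotes the ad immediately below it (the bottom ad pays $0$). An advertiser's expected payoff is $(v-p)$ times its click probability; the search engine's expected profit is the sum over ads of price per click times click probability. *)

theory Defs
  imports Complex_Main "HOL-Library.Product_Lexorder"
begin

text \<open>Advertisers are indexed 0,...,N-1. c = click-through rates, mu = c + gamma.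
  An ordering (ranking) is a list of advertisers; position k holds ord ! k.\<close>

definition is_ordering :: "nat \<Rightarrow> nat list \<Rightarrow> bool" where
  "is_ordering N ord \<longleftrightarrow> distinct ord \<and> set ord = {..<N}"

definition ce_weight :: "(nat \<Rightarrow> real) \<Rightarrow> (nat \<Rightarrow> real) \<Rightarrow> nat \<Rightarrow> real" where
  "ce_weight c mu i = c i / mu i"

definition score :: "(nat \<Rightarrow> real) \<Rightarrow> (nat \<Rightarrow> real) \<Rightarrow> (nat \<Rightarrow> real) \<Rightarrow> nat \<Rightarrow> real" where
  "score c mu b i = ce_weight c mu i * b i"

definition ce_rank :: "(nat \<Rightarrow> real) \<Rightarrow> (nat \<Rightarrow> real) \<Rightarrow> (nat \<Rightarrow> real) \<Rightarrow> nat \<Rightarrow> nat list" where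
  "ce_rank c mu b N = sort_key (\<lambda>i. (- score c mu b i, i)) [0..<N]"

definition click_prob :: "(nat \<Rightarrow> real) \<Rightarrow> (nat \<Rightarrow> real) \<Rightarrow> nat list \<Rightarrow> nat \<Rightarrow> real" where
  "click_prob c mu ord k = c (ord ! k) * (\<Prod>l<k. 1 - mu (ord ! l))"

definition pos_price :: "(nat \<Rightarrow> real) \<Rightarrow> (nat \<Rightarrow> real) \<Rightarrow> (nat \<Rightarrow> real) \<Rightarrow> nat list \<Rightarrow> nat \<Rightarrow> real" where
  "pos_price c mu b ord k =
     (if Suc k < length ord then score c mu b (ord ! Suc k) / ce_weight c mu (ord ! k) else 0)"

definition adv_payoff :: "(nat \<Rightarrow> real) \<Rightarrow> (nat \<Rightarrow> real) \<Rightarrow> (nat \<Rightarrow> real) \<Rightarrow> (nat \<Rightarrow> real)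
    \<Rightarrow> nat list \<Rightarrow> nat \<Rightarrow> real" where
  "adv_payoff c mu v b ord i =
     (\<Sum>k<length ord. if ord ! k = i then (v i - pos_price c mu b ord k) * click_prob c mu ord k else 0)"

definition ce_payoff :: "(nat \<Rightarrow> real) \<Rightarrow> (nat \<Rightarrow> real) \<Rightarrow> (nat \<Rightarrow> real) \<Rightarrow> (nat \<Rightarrow> real)
    \<Rightarrow> nat \<Rightarrow> nat \<Rightarrow> real" where
  "ce_payoff c mu v b N i = adv_payoff c mu v b (ce_rank c mu b N) i"

definition ce_price_of :: "(nat \<Rightarrow> real) \<Rightarrow> (nat \<Rightarrow> real) \<Rightarrow> (nat \<Rightarrow> real) \<Rightarrow> nat \<Rightarrow> nat \<Rightarrow> real" where
  "ce_price_of c mu b N i =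
     (\<Sum>k<N. if ce_rank c mu b N ! k = i then pos_price c mu b (ce_rank c mu b N) k else 0)"

definition move_to :: "nat list \<Rightarrow> nat \<Rightarrow> nat \<Rightarrow> nat list" where
  "move_to ord i k = (let others = filter (\<lambda>l. l \<noteq> i) ord in take k others @ [i] @ drop k others)"

definition welfare :: "(nat \<Rightarrow> real) \<Rightarrow> (nat \<Rightarrow> real) \<Rightarrow> (nat \<Rightarrow> real) \<Rightarrow> nat list \<Rightarrow> real" where
  "welfare c mu v ord = (\<Sum>k<length ord. v (ord ! k) * click_prob c mu ord k)"

definition se_profit :: "(nat \<Rightarrow> real) \<Rightarrow> (nat \<Rightarrow> real) \<Rightarrow> (nat \<Rightarrow> real) \<Rightarrow> nat list \<Rightarrow> real" where
  "se_profit c mu p ord = (\<Sum>k<length ord. p (ord ! k) * click_prob c mu ord k)"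

end

theory Submission imports Defs begin

text \<open>With these bids the CE score w_j b_j of advertiser j equals the expected welfare
  W_j generated by the ads j, ..., N-1 shown in index order: the recursion for b_j is exactly
  the recursion W_j = c_j v_j + (1 - \<mu>_j) W_{j+1}. Since W_{j+1} is a convex combination of
  ratios c v / \<mu> that are at most that of j, the W_j decrease, so CE ranks by index and
  advertiser j pays \<mu>_j W_{j+1} / c_j per click. If advertiser i is moved to position k among the
  others, its payoff is (c_i v_i - \<mu>_i W_next) times the probability of reaching position k;
  passing one further advertiser j changes it by a nonnegative multiple of
  \<mu>_i c_j v_j - \<mu>_j c_i v_i, whose sign shows that the payoff is unimodal with peak at i's own
  position. Finally, the order by decreasing c u / \<mu> maximises \<Sum> u c \<Prod>(1 - \<mu>) by an exchange
  argument, for u = v and for u = the prices, since c_j p_j / \<mu>_j = W_{j+1} decreases too.\<close>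

lemma welfare_Nil [simp]: "welfare c mu u [] = 0"
  by (simp add: welfare_def)

lemma welfare_Cons:
  "welfare c mu u (x # xs) = u x * c x + (1 - mu x) * welfare c mu u xs"
proof -
  have reach: "(\<Prod>l<Suc k. 1 - mu ((x # xs) ! l)) = (1 - mu x) * (\<Prod>l<k. 1 - mu (xs ! l))" for k
    by (simp add: prod.lessThan_Suc_shift del: prod.lessThan_Suc)
  show ?thesis
    unfolding welfare_def click_prob_def
    by (simp add: sum.lessThan_Suc_shift reach sum_distrib_left algebra_simps
        del: sum.lessThan_Suc prod.lessThan_Suc)
qed

lemma welfare_swap_le:
  assumes "mu y * (c x * u x) \<le> mu x * (c y * u y)"
  shows "welfare c mu u (x # y # zs) \<le> welfare c mu u (y # x # zs)"
proof -
  have "welfare c mu u (y # x # zs) - welfare c mu u (x # y # zs)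
      = mu x * (c y * u y) - mu y * (c x * u x)"
    by (simp add: welfare_Cons algebra_simps)
  then show ?thesis using assms by linarith
qed

text \<open>The hypothesis on the ratios c u / \<mu> is stated cross-multiplied, so no division occurs.\<close>

lemma welfare_le_welfare_insort:
  assumes mu_le: "\<forall>j<N. mu j \<le> 1"
    and ratio_antimono: "\<forall>i j. i \<le> j \<longrightarrow> j < N \<longrightarrow> mu i * (c j * u j) \<le> mu j * (c i * u i)"
  shows "sorted ys \<Longrightarrow> set ys \<subseteq> {..<N} \<Longrightarrow> x < N \<Longrightarrow>
     welfare c mu u (x # ys) \<le> welfare c mu u (insort x ys)"
proof (induction ys)
  case (Cons y ys)
  show ?case
  proof (cases "x \<le> y")
    case False
    have y: "y < N" using Cons.prems by auto
    have "welfare c mu u (x # y # ys) \<le> welfare c mu u (y # x # ys)"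
      by (rule welfare_swap_le) (use ratio_antimono False Cons.prems in auto)
    also have "\<dots> = u y * c y + (1 - mu y) * welfare c mu u (x # ys)"
      by (simp add: welfare_Cons)
    also have "\<dots> \<le> u y * c y + (1 - mu y) * welfare c mu u (insort x ys)"
      using Cons.IH Cons.prems mu_le y by (intro add_left_mono mult_left_mono) auto
    also have "\<dots> = welfare c mu u (insort x (y # ys))"
      using False by (simp add: welfare_Cons)
    finally show ?thesis .
  qed simp
qed simp

lemma welfare_le_welfare_sorted:
  assumes mu_le: "\<forall>j<N. mu j \<le> 1"
    and ratio_antimono: "\<forall>i j. i \<le> j \<longrightarrow> j < N \<longrightarrow> mu i * (c j * u j) \<le> mu j * (c i * u i)"
  shows "distinct \<sigma> \<Longrightarrow> set \<sigma> \<subseteq> {..<N} \<Longrightarrow>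
     welfare c mu u \<sigma> \<le> welfare c mu u (sorted_list_of_set (set \<sigma>))"
proof (induction \<sigma>)
  case (Cons x xs)
  have x: "x < N" "x \<notin> set xs" using Cons.prems by auto
  have "welfare c mu u (x # xs) = u x * c x + (1 - mu x) * welfare c mu u xs"
    by (simp add: welfare_Cons)
  also have "\<dots> \<le> u x * c x + (1 - mu x) * welfare c mu u (sorted_list_of_set (set xs))"
    using Cons x mu_le by (intro add_left_mono mult_left_mono) auto
  also have "\<dots> = welfare c mu u (x # sorted_list_of_set (set xs))"
    by (simp add: welfare_Cons)
  also have "\<dots> \<le> welfare c mu u (insort x (sorted_list_of_set (set xs)))"
    by (rule welfare_le_welfare_insort[OF mu_le ratio_antimono]) (use Cons.prems x in auto)
  also have "\<dots> = welfare c mu u (sorted_list_of_set (set (x # xs)))"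
    using x by (simp add: sorted_list_of_set_insert)
  finally show ?case .
qed simp

lemma welfare_le_ratio_bound:
  assumes "0 \<le> R" and "\<forall>x\<in>set xs. mu x \<le> 1 \<and> c x * u x \<le> R * mu x"
  shows "welfare c mu u xs \<le> R"
  using assms(2)
proof (induction xs)
  case (Cons x xs)
  then have "welfare c mu u (x # xs) \<le> R * mu x + (1 - mu x) * R"
    unfolding welfare_Cons by (intro add_mono mult_left_mono) (auto simp: mult.commute)
  then show ?case by (simp add: algebra_simps)
qed (simp add: assms(1))

lemma nth_take_Cons_drop:
  assumes "k \<le> length xs" "q \<le> length xs"
  shows "(take k xs @ x # drop k xs) ! q = (if q < k then xs ! q else if q = k then x else xs ! (q - 1))"
proof -
  have "(take k xs @ x # drop k xs) ! q = (if q < k then xs ! q else (x # drop k xs) ! (q - k))"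
    using assms(1) by (simp add: nth_append)
  moreover have "(x # drop k xs) ! (q - k) = xs ! (q - 1)" if "k < q"
    using that assms by (simp add: nth_Cons')
  ultimately show ?thesis by auto
qed

lemma move_to_nth_self:
  assumes "distinct L" "k < length L" "L ! k = i"
  shows "move_to L i k = L"
proof -
  let ?A = "take k L" and ?B = "drop (Suc k) L"
  have L: "L = ?A @ i # ?B" using id_take_nth_drop[OF assms(2)] assms(3) by simp
  have "distinct (?A @ i # ?B)" using assms(1) by (simp only: L[symmetric])
  then have "filter (\<lambda>l. l \<noteq> i) ?A = ?A" "filter (\<lambda>l. l \<noteq> i) ?B = ?B"
    by (auto intro!: filter_True)
  then have "filter (\<lambda>l. l \<noteq> i) L = ?A @ ?B"
    by (subst L) simp
  then show ?thesis
    by (subst (2) L) (use assms(2) in \<open>simp add: move_to_def min_def\<close>)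
qed

lemma distinct_move_to: "distinct L \<Longrightarrow> distinct (move_to L i k)"
  by (auto simp: move_to_def Let_def set_take_disj_set_drop_if_distinct dest: in_set_takeD in_set_dropD)

text \<open>An advertiser's own bid only enters the price paid by the ad above it.\<close>

lemma adv_payoff_own_bid_upd:
  assumes "distinct L"
  shows "adv_payoff c mu v (b(i := x)) L i = adv_payoff c mu v b L i"
  unfolding adv_payoff_def
proof (rule sum.cong[OF refl])
  fix q assume q: "q \<in> {..<length L}"
  have "pos_price c mu (b(i := x)) L q = pos_price c mu b L q" if "L ! q = i"
  proof -
    have "Suc q < length L \<Longrightarrow> L ! Suc q \<noteq> i"
      using that q assms nth_eq_iff_index_eq[of L q "Suc q"] by auto
    then show ?thesis by (simp add: pos_price_def score_def)
  qed
  then show "(if L ! q = i then (v i - pos_price c mu (b(i := x)) L q) * click_prob c mu L q else 0) =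
        (if L ! q = i then (v i - pos_price c mu b L q) * click_prob c mu L q else 0)"
    by simp
qed

definition other :: "nat \<Rightarrow> nat \<Rightarrow> nat" where
  "other i l = (if l < i then l else Suc l)"

lemma filter_neq_upt:
  assumes "i < N"
  shows "filter (\<lambda>l. l \<noteq> i) [0..<N] = [0..<i] @ [Suc i..<N]"
proof -
  have "[0..<N] = [0..<i] @ i # [Suc i..<N]"
    using assms by (metis le_add_diff_inverse less_imp_le upt_add_eq_append upt_conv_Cons zero_le)
  then show ?thesis by (simp add: filter_id_conv)
qed

lemma move_to_upt_nth:
  assumes "i < N" "k < N" "q < N"
  shows "move_to [0..<N] i k ! q = (if q < k then other i q else if q = k then i else other i (q - 1))"
proof -
  let ?O = "[0..<i] @ [Suc i..<N]"
  have O: "length ?O = N - 1" "\<And>l. l < N - 1 \<Longrightarrow> ?O ! l = other i l"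
    using assms(1) by (auto simp: nth_append other_def)
  have "move_to [0..<N] i k ! q = (if q < k then ?O ! q else if q = k then i else ?O ! (q - 1))"
    unfolding move_to_def Let_def filter_neq_upt[OF assms(1)] append.simps
    by (rule nth_take_Cons_drop) (use assms O in auto)
  then show ?thesis using assms O by auto
qed

lemma length_move_to_upt: "i < N \<Longrightarrow> length (move_to [0..<N] i k) = N"
  by (simp add: move_to_def filter_neq_upt)

locale ce_equilibrium =
  fixes N :: nat and c mu v b :: "nat \<Rightarrow> real"
  assumes c_pos: "\<And>i. i < N \<Longrightarrow> 0 < c i"
    and c_le_mu: "\<And>i. i < N \<Longrightarrow> c i \<le> mu i"
    and mu_le_1: "\<And>i. i < N \<Longrightarrow> mu i \<le> 1"
    and v_nonneg: "\<And>i. i < N \<Longrightarrow> 0 \<le> v i"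
    and ratio_sorted: "\<And>i. Suc i < N \<Longrightarrow> c (Suc i) * v (Suc i) / mu (Suc i) \<le> c i * v i / mu i"
    and bids: "\<And>i. i < N \<Longrightarrow> b i = mu i / c i *
        (v i * c i + (1 - mu i) * (if Suc i < N then b (Suc i) * c (Suc i) / mu (Suc i) else 0))"
begin

lemma mu_pos: "i < N \<Longrightarrow> 0 < mu i"
  using c_pos c_le_mu by force

definition ratio :: "nat \<Rightarrow> real" where
  "ratio j = c j * v j / mu j"

lemma mu_mult_ratio: "j < N \<Longrightarrow> mu j * ratio j = c j * v j"
  using mu_pos[of j] by (simp add: ratio_def)

lemma ratio_nonneg: "j < N \<Longrightarrow> 0 \<le> ratio j"
  using c_pos[of j] v_nonneg[of j] mu_pos[of j] by (simp add: ratio_def)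

lemma ratio_antimono: "i \<le> j \<Longrightarrow> j < N \<Longrightarrow> ratio j \<le> ratio i"
  by (rule lift_Suc_antimono_le_ivl[where N = "{n. Suc n < N}"]) (auto simp: ratio_def ratio_sorted)

lemma ratio_antimono_cross: "i \<le> j \<Longrightarrow> j < N \<Longrightarrow> mu i * (c j * v j) \<le> mu j * (c i * v i)"
proof -
  assume ij: "i \<le> j" "j < N"
  have "mu i * (c j * v j) = mu i * mu j * ratio j" using mu_mult_ratio[OF ij(2)] by simp
  also have "\<dots> \<le> mu i * mu j * ratio i"
    using ij ratio_antimono mu_pos[of i] mu_pos[of j] by simp
  also have "\<dots> = mu j * (c i * v i)" using mu_mult_ratio[of i] ij by simp
  finally show ?thesis .
qed

definition tail_welfare :: "nat \<Rightarrow> real" where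
  "tail_welfare j = welfare c mu v [j..<N]"

lemma tail_welfare_eq_0: "N \<le> j \<Longrightarrow> tail_welfare j = 0"
  by (simp add: tail_welfare_def)

lemma tail_welfare_Suc: "j < N \<Longrightarrow> tail_welfare j = c j * v j + (1 - mu j) * tail_welfare (Suc j)"
  by (simp add: tail_welfare_def upt_conv_Cons welfare_Cons mult.commute)

lemma score_eq_tail_welfare: "j < N \<Longrightarrow> score c mu b j = tail_welfare j"
proof (induction "N - j" arbitrary: j)
  case (Suc m)
  have below: "(if Suc j < N then b (Suc j) * c (Suc j) / mu (Suc j) else 0) = tail_welfare (Suc j)"
    using Suc.hyps(1)[of "Suc j"] Suc.hyps(2) tail_welfare_eq_0[of "Suc j"]
    by (auto simp: score_def ce_weight_def mult_ac)
  have "score c mu b j = c j / mu j * b j" by (simp add: score_def ce_weight_def)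
  also have "\<dots> = c j * v j + (1 - mu j) * tail_welfare (Suc j)"
    using bids[OF Suc.prems] c_pos[OF Suc.prems] mu_pos[OF Suc.prems] below by (simp add: mult.commute)
  also have "\<dots> = tail_welfare j" using tail_welfare_Suc[OF Suc.prems] by simp
  finally show ?case .
qed simp

lemma tail_welfare_Suc_le_ratio: "j < N \<Longrightarrow> tail_welfare (Suc j) \<le> ratio j"
  unfolding tail_welfare_def
proof (rule welfare_le_ratio_bound)
  assume j: "j < N"
  show "0 \<le> ratio j" using ratio_nonneg[OF j] .
  show "\<forall>x\<in>set [Suc j..<N]. mu x \<le> 1 \<and> c x * v x \<le> ratio j * mu x"
  proof
    fix x assume "x \<in> set [Suc j..<N]"
    then have x: "j \<le> x" "x < N" by auto
    have "c x * v x = mu x * ratio x" using mu_mult_ratio[OF x(2)] by simp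
    also have "\<dots> \<le> mu x * ratio j" using ratio_antimono[OF x] mu_pos[OF x(2)] by simp
    finally show "mu x \<le> 1 \<and> c x * v x \<le> ratio j * mu x" using mu_le_1[OF x(2)] by (simp add: mult.commute)
  qed
qed

lemma tail_welfare_Suc_le: "tail_welfare (Suc j) \<le> tail_welfare j"
proof (cases "j < N")
  case True
  have "tail_welfare j - tail_welfare (Suc j) = mu j * (ratio j - tail_welfare (Suc j))"
    using tail_welfare_Suc[OF True] mu_mult_ratio[OF True] by (simp add: algebra_simps)
  also have "\<dots> \<ge> 0" using mu_pos[OF True] tail_welfare_Suc_le_ratio[OF True] by simp
  finally show ?thesis by simp
qed (simp add: tail_welfare_eq_0)

lemma tail_welfare_antimono: "i \<le> j \<Longrightarrow> tail_welfare j \<le> tail_welfare i"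
  using tail_welfare_Suc_le by (rule lift_Suc_antimono_le)

lemma ce_rank_eq_upt: "ce_rank c mu b N = [0..<N]"
  unfolding ce_rank_def
proof (rule sort_key_id_if_sorted, subst sorted_iff_nth_mono, intro allI impI)
  fix p q assume pq: "p \<le> q" "q < length (map (\<lambda>i. (- score c mu b i, i)) [0..<N])"
  then have "score c mu b q \<le> score c mu b p"
    using tail_welfare_antimono score_eq_tail_welfare by auto
  then show "map (\<lambda>i. (- score c mu b i, i)) [0..<N] ! p \<le> map (\<lambda>i. (- score c mu b i, i)) [0..<N] ! q"
    using pq by (auto simp: less_eq_prod_def)
qed

lemma c_mult_ce_price_of: "j < N \<Longrightarrow> c j * ce_price_of c mu b N j = mu j * tail_welfare (Suc j)"
proof -
  assume j: "j < N"
  have "ce_price_of c mu b N j = (\<Sum>k<N. if k = j then pos_price c mu b [0..<N] k else 0)"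
    unfolding ce_price_of_def ce_rank_eq_upt by (rule sum.cong) auto
  also have "\<dots> = pos_price c mu b [0..<N] j" using j by simp
  finally have "ce_price_of c mu b N j = pos_price c mu b [0..<N] j" .
  then show ?thesis
    using j c_pos[OF j] mu_pos[OF j] score_eq_tail_welfare[of "Suc j"] tail_welfare_eq_0[of "Suc j"]
    by (auto simp: pos_price_def ce_weight_def field_simps)
qed


definition reach_prob :: "nat \<Rightarrow> nat \<Rightarrow> real" where
  "reach_prob i k = (\<Prod>l<k. 1 - mu (other i l))"

definition moved_payoff :: "nat \<Rightarrow> nat \<Rightarrow> real" where
  "moved_payoff i k = (c i * v i - mu i * tail_welfare (other i k)) * reach_prob i k"

lemma reach_prob_nonneg: "k < N \<Longrightarrow> 0 \<le> reach_prob i k"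
  unfolding reach_prob_def by (rule prod_nonneg) (use mu_le_1 in \<open>auto simp: other_def\<close>)

lemma adv_payoff_move_to_upt:
  assumes i: "i < N" and k: "k < N"
  shows "adv_payoff c mu v b (move_to [0..<N] i k) i = moved_payoff i k"
proof -
  let ?M = "move_to [0..<N] i k"
  have len: "length ?M = N" using length_move_to_upt[OF i] .
  have at_i: "?M ! q = i \<longleftrightarrow> q = k" if "q < N" for q
    using move_to_upt_nth[OF i k that] by (auto simp: other_def)
  have "adv_payoff c mu v b ?M i =
      (\<Sum>q<N. if q = k then (v i - pos_price c mu b ?M q) * click_prob c mu ?M q else 0)"
    unfolding adv_payoff_def len by (rule sum.cong) (auto simp: at_i)
  also have "\<dots> = (v i - pos_price c mu b ?M k) * click_prob c mu ?M k" using k by simp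
  also have "click_prob c mu ?M k = c i * reach_prob i k"
    unfolding click_prob_def reach_prob_def using i k move_to_upt_nth by (auto intro!: prod.cong)
  also have "pos_price c mu b ?M k = mu i / c i * tail_welfare (other i k)"
  proof (cases "Suc k < N")
    case True
    then have "?M ! Suc k = other i k" "other i k < N"
      using move_to_upt_nth[OF i k True] by (auto simp: other_def)
    then show ?thesis
      using True move_to_upt_nth[OF i k k] score_eq_tail_welfare[of "other i k"]
      by (simp add: pos_price_def len ce_weight_def)
  next
    case False
    then have "N \<le> other i k" using i k by (auto simp: other_def)
    then show ?thesis using False by (simp add: pos_price_def len tail_welfare_eq_0)
  qed
  also have "(v i - mu i / c i * tail_welfare (other i k)) * (c i * reach_prob i k) = moved_payoff i k"
    using c_pos[OF i] by (simp add: moved_payoff_def field_simps)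
  finally show ?thesis .
qed

lemma moved_payoff_le_Suc_above:
  assumes i: "i < N" and ki: "Suc k \<le> i"
  shows "moved_payoff i k \<le> moved_payoff i (Suc k)"
proof -
  have k: "k < N" and other_k: "other i k = k" using i ki by (auto simp: other_def)
  have reach_Suc: "reach_prob i (Suc k) = reach_prob i k * (1 - mu k)"
    by (simp add: reach_prob_def other_k)
  have "tail_welfare (other i (Suc k)) \<le> tail_welfare (Suc k)"
    by (rule tail_welfare_antimono) (simp add: other_def)
  then have "(c i * v i - mu i * tail_welfare (Suc k)) * reach_prob i (Suc k) \<le> moved_payoff i (Suc k)"
    unfolding moved_payoff_def using mu_pos[OF i] reach_prob_nonneg[of "Suc k" i] ki i
    by (intro mult_right_mono) auto
  moreover have "(c i * v i - mu i * tail_welfare (Suc k)) * reach_prob i (Suc k) - moved_payoff i k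
      = reach_prob i k * (mu i * (c k * v k) - mu k * (c i * v i))"
    unfolding moved_payoff_def other_k reach_Suc tail_welfare_Suc[OF k] by (simp add: algebra_simps)
  moreover have "0 \<le> reach_prob i k * (mu i * (c k * v k) - mu k * (c i * v i))"
    using reach_prob_nonneg[OF k] ratio_antimono_cross[of k i] ki i by simp
  ultimately show ?thesis by linarith
qed

lemma moved_payoff_Suc_le_below:
  assumes ik: "i \<le> k" and k: "Suc k < N"
  shows "moved_payoff i (Suc k) \<le> moved_payoff i k"
proof -
  have other_k: "other i k = Suc k" "other i (Suc k) = Suc (Suc k)" using ik by (auto simp: other_def)
  have reach_Suc: "reach_prob i (Suc k) = reach_prob i k * (1 - mu (Suc k))"
    by (simp add: reach_prob_def other_k)
  have "moved_payoff i k - moved_payoff i (Suc k)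
      = reach_prob i k * (mu (Suc k) * (c i * v i) - mu i * (c (Suc k) * v (Suc k)))"
    unfolding moved_payoff_def other_k reach_Suc tail_welfare_Suc[OF k] by (simp add: algebra_simps)
  moreover have "0 \<le> reach_prob i k * (mu (Suc k) * (c i * v i) - mu i * (c (Suc k) * v (Suc k)))"
    using reach_prob_nonneg[of k i] ratio_antimono_cross[of i "Suc k"] ik k by simp
  ultimately show ?thesis by linarith
qed

lemma moved_payoff_le_own_position:
  assumes "i < N" "k < N"
  shows "moved_payoff i k \<le> moved_payoff i i"
proof (cases "k \<le> i")
  case True
  show ?thesis
    by (rule lift_Suc_mono_le_ivl[where N = "{..<i}"])
      (use True assms in \<open>auto intro: moved_payoff_le_Suc_above\<close>)
next
  case False
  show ?thesis
    by (rule lift_Suc_antimono_le_ivl[where N = "{n. i \<le> n \<and> Suc n < N}"])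
      (use False assms in \<open>auto intro: moved_payoff_Suc_le_below\<close>)
qed

lemma ce_payoff_eq_moved_payoff: "i < N \<Longrightarrow> ce_payoff c mu v b N i = moved_payoff i i"
  using adv_payoff_move_to_upt[of i i] move_to_nth_self[of "[0..<N]" i i]
  by (simp add: ce_payoff_def ce_rank_eq_upt)

lemma move_to_payoff_le_ce_payoff:
  assumes "i < N" "k < N"
  shows "adv_payoff c mu v b (move_to (ce_rank c mu b N) i k) i \<le> ce_payoff c mu v b N i"
  using adv_payoff_move_to_upt[OF assms] moved_payoff_le_own_position[OF assms]
    ce_payoff_eq_moved_payoff[OF assms(1)]
  by (simp add: ce_rank_eq_upt)

text \<open>A new bid of i leaves the relative order of the others intact, so it only moves i.\<close>

lemma ce_rank_bid_upd_eq_move_to: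
  assumes i: "i < N"
  obtains k where "k < N" "ce_rank c mu (b(i := x)) N = move_to [0..<N] i k"
proof -
  define key where "key = (\<lambda>j. (- score c mu (b(i := x)) j, j))"
  define L where "L = sort_key key [0..<N]"
  have dL: "distinct L" and sL: "set L = {..<N}" and lL: "length L = N" by (auto simp: L_def)
  have "map key (filter (\<lambda>l. l \<noteq> i) [0..<N])
      = map (\<lambda>j. (- score c mu b j, j)) (filter (\<lambda>l. l \<noteq> i) [0..<N])"
    by (auto simp: key_def score_def)
  moreover have "sorted (map (\<lambda>j. (- score c mu b j, j)) (filter (\<lambda>l. l \<noteq> i) [0..<N]))"
    using ce_rank_eq_upt unfolding ce_rank_def by (metis sorted_filter sorted_sort_key)
  ultimately have "sorted (map key (filter (\<lambda>l. l \<noteq> i) [0..<N]))" by (simp only:)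
  then have "filter (\<lambda>l. l \<noteq> i) L = filter (\<lambda>l. l \<noteq> i) [0..<N]"
    unfolding L_def filter_sort by (rule sort_key_id_if_sorted)
  moreover obtain k where k: "k < N" "L ! k = i"
    using i sL lL by (metis in_set_conv_nth lessThan_iff)
  ultimately have "L = move_to [0..<N] i k"
    using move_to_nth_self[OF dL, of k i] lL by (simp add: move_to_def)
  then show ?thesis using that k(1) by (simp add: L_def key_def ce_rank_def)
qed

lemma bid_deviation_payoff_le_ce_payoff:
  assumes "i < N"
  shows "ce_payoff c mu v (b(i := x)) N i \<le> ce_payoff c mu v b N i"
proof -
  obtain k where k: "k < N" and rank: "ce_rank c mu (b(i := x)) N = move_to [0..<N] i k"
    using ce_rank_bid_upd_eq_move_to[OF assms] .
  have "distinct (move_to [0..<N] i k)" by (simp add: distinct_move_to)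
  then have "ce_payoff c mu v (b(i := x)) N i = adv_payoff c mu v b (move_to [0..<N] i k) i"
    by (simp add: ce_payoff_def rank adv_payoff_own_bid_upd)
  also have "\<dots> \<le> ce_payoff c mu v b N i"
    using move_to_payoff_le_ce_payoff[OF assms k] by (simp add: ce_rank_eq_upt)
  finally show ?thesis .
qed

lemma welfare_le_welfare_ce_rank:
  assumes "is_ordering N \<sigma>"
  shows "welfare c mu v \<sigma> \<le> welfare c mu v (ce_rank c mu b N)"
proof -
  have "welfare c mu v \<sigma> \<le> welfare c mu v (sorted_list_of_set (set \<sigma>))"
    by (rule welfare_le_welfare_sorted[where N = N])
      (use assms mu_le_1 ratio_antimono_cross in \<open>auto simp: is_ordering_def\<close>)
  then show ?thesis using assms by (simp add: is_ordering_def lessThan_atLeast0 ce_rank_eq_upt)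
qed

lemma se_profit_le_se_profit_ce_rank:
  assumes "is_ordering N \<sigma>"
  shows "se_profit c mu (ce_price_of c mu b N) \<sigma> \<le> se_profit c mu (ce_price_of c mu b N) (ce_rank c mu b N)"
proof -
  let ?p = "ce_price_of c mu b N"
  have "mu i * (c j * ?p j) \<le> mu j * (c i * ?p i)" if ij: "i \<le> j" "j < N" for i j
  proof -
    have "mu i * (mu j * tail_welfare (Suc j)) \<le> mu j * (mu i * tail_welfare (Suc i))"
      using tail_welfare_antimono[of "Suc i" "Suc j"] mu_pos[of i] mu_pos[of j] ij by simp
    then show ?thesis using c_mult_ce_price_of[of i] c_mult_ce_price_of[of j] ij by simp
  qed
  then have "welfare c mu ?p \<sigma> \<le> welfare c mu ?p (sorted_list_of_set (set \<sigma>))"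
    by (intro welfare_le_welfare_sorted[where N = N])
      (use assms mu_le_1 in \<open>auto simp: is_ordering_def\<close>)
  then show ?thesis
    using assms by (simp add: is_ordering_def lessThan_atLeast0 ce_rank_eq_upt se_profit_def welfare_def)
qed

end

theorem theorem3:
  fixes N :: nat and c \<gamma> v b :: "nat \<Rightarrow> real"
  defines "mu \<equiv> (\<lambda>i. c i + \<gamma> i)"
  assumes ctr: "\<forall>i<N. 0 < c i \<and> c i \<le> 1"
    and gam: "\<forall>i<N. 0 \<le> \<gamma> i"
    and mu_le: "\<forall>i<N. mu i \<le> 1"
    and val: "\<forall>i<N. 0 \<le> v i"
    and sorted: "\<forall>i. Suc i < N \<longrightarrow> c (Suc i) * v (Suc i) / mu (Suc i) \<le> c i * v i / mu i"
    and bids: "\<forall>i<N. b i = mu i / c i *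
        (v i * c i + (1 - mu i) * (if Suc i < N then b (Suc i) * c (Suc i) / mu (Suc i) else 0))"
  shows "(\<forall>i<N. \<forall>b'\<ge>0. ce_payoff c mu v (b(i := b')) N i \<le> ce_payoff c mu v b N i)
       \<and> (\<forall>i<N. \<forall>k<N. adv_payoff c mu v b (move_to (ce_rank c mu b N) i k) i \<le> ce_payoff c mu v b N i)
       \<and> (\<forall>\<sigma>. is_ordering N \<sigma> \<longrightarrow> welfare c mu v \<sigma> \<le> welfare c mu v (ce_rank c mu b N))
       \<and> (\<forall>\<sigma>. is_ordering N \<sigma> \<longrightarrow>
            se_profit c mu (ce_price_of c mu b N) \<sigma> \<le> se_profit c mu (ce_price_of c mu b N) (ce_rank c mu b N))"
proof -
  interpret ce_equilibrium N c mu v b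
    by unfold_locales (use ctr gam mu_le val sorted bids in \<open>auto simp: mu_def\<close>)
  show ?thesis
    using bid_deviation_payoff_le_ce_payoff move_to_payoff_le_ce_payoff
      welfare_le_welfare_ce_rank se_profit_le_se_profit_ce_rank
    by blast
qed

end
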